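(* In the network system of the context, fix $i$ and suppose $v_i$ is measurable and the $i$th subcontroller is $u_i=\hat K_iR_i\begin{bmatrix} y_i\\ v_i\end{bmatrix}$ with $R_i=\begin{bmatrix} I&-G_{y_iv_i}\end{bmatrix}$ and $\hat K_i$ a stabilizing controller for $G_{y_iu_i}$, while the other subcontrollers $u_j=K_jy_j$ ($j\ne i$) are arbitrary proper real rational transfer matrices. Then for every $j\neq i$ the closed-loop transfer matrix from $d_j$ to $u_i$ is zero; i.e. $u_i=0$ for every disturbance $d_j$ with $j\ne i$ (when $d_i=0$).
   Context: For $k=1,\dots,N$, subsystem $G_k$ is a proper real rational transfer matrix with inputs $(v_k,d_k,u_k)$ (interaction, disturbance, control) and outputs $(w_k,z_k,y_k)$ (interaction, evaluation, measurement), $G_{a_kb_k}$ denoting the block from $b_k$ to $a_k$. Stacked signals $\boldsymbol v=\mathrm{col}(v_1,\dots,v_N)$ etc.; the interaction is $\boldsymbol v=\boldsymbol L\boldsymbol w$ with $\boldsymbol L$ a proper real rational transfer matrix. All feedback systems are assumed well-posed. $\hat K_i$ is a stabilizing controller for $G_{y_iu_i}$ if the positive feedback loop $y_i=G_{y_iu_i}u_i$, $u_i=\hat K_iy_i$ is internally stable. *)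

theory Defs
  imports "Jordan_Normal_Form.Matrix" "HOL-Computational_Algebra.Fraction_Field"
    "HOL-Computational_Algebra.Polynomial" Complex_Main
begin

text \<open>Real rational functions (in the Laplace variable s): the fraction field of real polynomials.
  Transfer matrices are matrices over this field; signals (Laplace transforms) are vectors over it.\<close>
type_synonym rfun = "real poly fract"

definition rat_proper :: "rfun \<Rightarrow> bool" where
  "rat_proper x \<longleftrightarrow> (\<exists>p q. q \<noteq> 0 \<and> x = Fract p q \<and> degree p \<le> degree q)"

definition rat_stable :: "rfun \<Rightarrow> bool" where
  "rat_stable x \<longleftrightarrow> (\<exists>p q. q \<noteq> 0 \<and> x = Fract p q \<and> degree p \<le> degree q \<and>
      (\<forall>s::complex. poly (map_poly complex_of_real q) s = 0 \<longrightarrow> Re s < 0))"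

definition proper_mat :: "rfun mat \<Rightarrow> bool" where
  "proper_mat M \<longleftrightarrow> (\<forall>a<dim_row M. \<forall>b<dim_col M. rat_proper (M $$ (a,b)))"

definition stable_mat :: "rfun mat \<Rightarrow> bool" where
  "stable_mat M \<longleftrightarrow> (\<forall>a<dim_row M. \<forall>b<dim_col M. rat_stable (M $$ (a,b)))"

definition hcat :: "rfun mat \<Rightarrow> rfun mat \<Rightarrow> rfun mat" where
  "hcat A B = four_block_mat A B (0\<^sub>m 0 (dim_col A)) (0\<^sub>m 0 (dim_col B))"

text \<open>Positive feedback loop y = G u + e1, u = K y + e2 (G : p x m, K : m x p).
  Its map (e1,e2) -> (y,u) is the inverse of [[I,-G],[-K,I]]. Well-posed and internally stable
  iff this block matrix is invertible and all entries of its inverse are stable.\<close>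
definition stabilizing :: "rfun mat \<Rightarrow> rfun mat \<Rightarrow> bool" where
  "stabilizing K G \<longleftrightarrow>
     (let p = dim_row G; m = dim_col G;
          A = four_block_mat (1\<^sub>m p) (- G) (- K) (1\<^sub>m m)
      in K \<in> carrier_mat m p \<and>
         (\<exists>B. B \<in> carrier_mat (p+m) (p+m) \<and> inverts_mat A B \<and> inverts_mat B A \<and> stable_mat B))"

fun stackv :: "(nat \<Rightarrow> rfun vec) \<Rightarrow> nat \<Rightarrow> rfun vec" where
  "stackv f 0 = vec 0 (\<lambda>_. 0)"
| "stackv f (Suc n) = stackv f n @\<^sub>v f n"

datatype sig_in = V | D | U     (* interaction, disturbance, control *)
datatype sig_out = W | Z | Y    (* interaction, evaluation, measurement *)

end

theory Submission
  imports Defs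
begin

text \<open>Since \<open>d\<^sub>i = 0\<close>, the measurement is \<open>y\<^sub>i = G\<^sub>y\<^sub>v v\<^sub>i + G\<^sub>y\<^sub>u u\<^sub>i\<close>, so the filter \<open>R\<^sub>i\<close> removes
  exactly the interaction term and \<open>R\<^sub>i [y\<^sub>i; v\<^sub>i] = G\<^sub>y\<^sub>u u\<^sub>i\<close>, whatever the rest of the network does.
  Hence \<open>u\<^sub>i = K\<^sub>i G\<^sub>y\<^sub>u u\<^sub>i\<close>, i.e. \<open>(G\<^sub>y\<^sub>u u\<^sub>i, u\<^sub>i)\<close> is an unforced solution of the feedback loop of
  \<open>K\<^sub>i\<close> and \<open>G\<^sub>y\<^sub>u\<close>. Well-posedness of that loop (invertibility of \<open>[[I, -G\<^sub>y\<^sub>u], [-K\<^sub>i, I]]\<close>)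
  forces this solution to vanish.\<close>

lemma hcat_mult_append_vec:
  assumes A: "A \<in> carrier_mat n a" and B: "B \<in> carrier_mat n b"
    and x: "x \<in> carrier_vec a" and y: "y \<in> carrier_vec b"
  shows "hcat A B *\<^sub>v (x @\<^sub>v y) = A *\<^sub>v x + B *\<^sub>v y"
proof -
  have "hcat A B = four_block_mat A B (0\<^sub>m 0 a) (0\<^sub>m 0 b)"
    unfolding hcat_def using A B by simp
  also have "\<dots> *\<^sub>v (x @\<^sub>v y) = (A *\<^sub>v x + B *\<^sub>v y) @\<^sub>v (0\<^sub>m 0 a *\<^sub>v x + 0\<^sub>m 0 b *\<^sub>v y)"
    using A B x y by (intro four_block_mat_mult_vec) auto
  also have "\<dots> = A *\<^sub>v x + B *\<^sub>v y"
    by (intro eq_vecI) auto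
  finally show ?thesis .
qed

lemma hcat_one_uminus_mult_append_vec:
  assumes H: "H \<in> carrier_mat p q" and v: "v \<in> carrier_vec q" and x: "x \<in> carrier_vec p"
  shows "hcat (1\<^sub>m p) (- H) *\<^sub>v ((H *\<^sub>v v + x) @\<^sub>v v) = x"
proof -
  have Hv: "H *\<^sub>v v \<in> carrier_vec p" using H v by simp
  have "hcat (1\<^sub>m p) (- H) *\<^sub>v ((H *\<^sub>v v + x) @\<^sub>v v) = 1\<^sub>m p *\<^sub>v (H *\<^sub>v v + x) + (- H) *\<^sub>v v"
    using H v Hv x by (intro hcat_mult_append_vec) auto
  also have "\<dots> = (H *\<^sub>v v + x) + - (H *\<^sub>v v)"
    using H v Hv x by simp
  also have "\<dots> = x"
    using Hv x by (simp add: comm_add_vec assoc_add_vec[symmetric])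
  finally show ?thesis .
qed

lemma left_invertible_mult_vec_eq_zero:
  fixes A B :: "'a :: semiring_1 mat"
  assumes "A \<in> carrier_mat n n" "B \<in> carrier_mat n n" "B * A = 1\<^sub>m n"
    and "x \<in> carrier_vec n" "A *\<^sub>v x = 0\<^sub>v n"
  shows "x = 0\<^sub>v n"
proof -
  have "x = (B * A) *\<^sub>v x" using assms(3) one_mult_mat_vec[OF assms(4)] by simp
  also have "\<dots> = B *\<^sub>v (A *\<^sub>v x)" using assms by (metis assoc_mult_mat_vec)
  also have "\<dots> = 0\<^sub>v n" using assms by auto
  finally show ?thesis .
qed

lemma stabilizing_feedback_fixpoint_zero:
  assumes stab: "stabilizing K G" and G: "G \<in> carrier_mat p m"
    and u: "u \<in> carrier_vec m" and fixpoint: "K *\<^sub>v (G *\<^sub>v u) = u"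
  shows "u = 0\<^sub>v m"
proof -
  define A where "A = four_block_mat (1\<^sub>m p) (- G) (- K) (1\<^sub>m m)"
  have dims: "dim_row G = p" "dim_col G = m" using G by auto
  obtain B where K: "K \<in> carrier_mat m p" and B: "B \<in> carrier_mat (p + m) (p + m)"
    and inv: "inverts_mat B A"
    using stab unfolding stabilizing_def Let_def dims A_def[symmetric] by blast
  have A: "A \<in> carrier_mat (p + m) (p + m)"
    unfolding A_def using G K by (intro four_block_carrier_mat) auto
  have Gu: "G *\<^sub>v u \<in> carrier_vec p" using G u by simp
  have top: "1\<^sub>m p *\<^sub>v (G *\<^sub>v u) + (- G) *\<^sub>v u = 0\<^sub>v p"
    using G u Gu by simp
  have bottom: "(- K) *\<^sub>v (G *\<^sub>v u) + 1\<^sub>m m *\<^sub>v u = 0\<^sub>v m"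
  proof -
    have "dim_vec (G *\<^sub>v u) = dim_col K" using K G by simp
    then show ?thesis using u fixpoint by simp
  qed
  have zero: "0\<^sub>v p @\<^sub>v 0\<^sub>v m = (0\<^sub>v (p + m) :: rfun vec)"
    by auto
  have "A *\<^sub>v (G *\<^sub>v u @\<^sub>v u)
      = (1\<^sub>m p *\<^sub>v (G *\<^sub>v u) + (- G) *\<^sub>v u) @\<^sub>v ((- K) *\<^sub>v (G *\<^sub>v u) + 1\<^sub>m m *\<^sub>v u)"
    unfolding A_def
    by (rule four_block_mat_mult_vec[OF one_carrier_mat uminus_carrier_mat[OF G]
          uminus_carrier_mat[OF K] one_carrier_mat Gu u])
  then have "A *\<^sub>v (G *\<^sub>v u @\<^sub>v u) = 0\<^sub>v (p + m)"
    unfolding top bottom zero .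
  moreover have "B * A = 1\<^sub>m (p + m)"
    using inv B unfolding inverts_mat_def by simp
  ultimately have "G *\<^sub>v u @\<^sub>v u = 0\<^sub>v (p + m)"
    using left_invertible_mult_vec_eq_zero[OF A B _ append_carrier_vec[OF Gu u]] by blast
  then have "G *\<^sub>v u @\<^sub>v u = 0\<^sub>v p @\<^sub>v 0\<^sub>v m"
    unfolding zero .
  then show ?thesis
    using append_vec_eq[OF Gu zero_carrier_vec] by blast
qed

theorem proposition5:
  fixes N i :: nat
    and din :: "nat \<Rightarrow> sig_in \<Rightarrow> nat" and dout :: "nat \<Rightarrow> sig_out \<Rightarrow> nat"
    and G :: "nat \<Rightarrow> sig_out \<Rightarrow> sig_in \<Rightarrow> rfun mat"
    and L :: "rfun mat"
    and K :: "nat \<Rightarrow> rfun mat" and Khat :: "rfun mat"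
    and v d u w z y :: "nat \<Rightarrow> rfun vec"
  assumes iN: "i < N"
    and G_dims: "\<And>k a b. k < N \<Longrightarrow> G k a b \<in> carrier_mat (dout k a) (din k b)"
    and G_proper: "\<And>k a b. k < N \<Longrightarrow> proper_mat (G k a b)"
    and L_dims: "L \<in> carrier_mat (\<Sum>k<N. din k V) (\<Sum>k<N. dout k W)"
    and L_proper: "proper_mat L"
    and K_dims: "\<And>j. j < N \<Longrightarrow> j \<noteq> i \<Longrightarrow> K j \<in> carrier_mat (din j U) (dout j Y)"
    and K_proper: "\<And>j. j < N \<Longrightarrow> j \<noteq> i \<Longrightarrow> proper_mat (K j)"
    and Khat_dims: "Khat \<in> carrier_mat (din i U) (dout i Y)"
    and Khat_stab: "stabilizing Khat (G i Y U)"
    and sig_dims: "\<And>k. k < N \<Longrightarrow> dim_vec (v k) = din k V \<and> dim_vec (d k) = din k D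
        \<and> dim_vec (u k) = din k U \<and> dim_vec (w k) = dout k W
        \<and> dim_vec (z k) = dout k Z \<and> dim_vec (y k) = dout k Y"
    and sys_w: "\<And>k. k < N \<Longrightarrow> w k = G k W V *\<^sub>v v k + G k W D *\<^sub>v d k + G k W U *\<^sub>v u k"
    and sys_z: "\<And>k. k < N \<Longrightarrow> z k = G k Z V *\<^sub>v v k + G k Z D *\<^sub>v d k + G k Z U *\<^sub>v u k"
    and sys_y: "\<And>k. k < N \<Longrightarrow> y k = G k Y V *\<^sub>v v k + G k Y D *\<^sub>v d k + G k Y U *\<^sub>v u k"
    and interaction: "stackv v N = L *\<^sub>v stackv w N"
    and ctrl_j: "\<And>j. j < N \<Longrightarrow> j \<noteq> i \<Longrightarrow> u j = K j *\<^sub>v y j"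
    and ctrl_i: "u i = Khat *\<^sub>v (hcat (1\<^sub>m (dout i Y)) (- G i Y V) *\<^sub>v (y i @\<^sub>v v i))"
    and d_i: "d i = 0\<^sub>v (din i D)"
  shows "u i = 0\<^sub>v (din i U)"
proof -
  have Gv: "G i Y V \<in> carrier_mat (dout i Y) (din i V)"
    and Gu: "G i Y U \<in> carrier_mat (dout i Y) (din i U)"
    and Gd: "G i Y D \<in> carrier_mat (dout i Y) (din i D)"
    using G_dims[OF iN] by auto
  have vc: "v i \<in> carrier_vec (din i V)" and uc: "u i \<in> carrier_vec (din i U)"
    using sig_dims[OF iN] unfolding carrier_vec_def by auto
  have "G i Y D *\<^sub>v d i = 0\<^sub>v (dout i Y)" using d_i Gd by auto
  then have y_i: "y i = G i Y V *\<^sub>v v i + G i Y U *\<^sub>v u i"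
    using sys_y[OF iN] Gv vc by simp
  have "hcat (1\<^sub>m (dout i Y)) (- G i Y V) *\<^sub>v (y i @\<^sub>v v i) = G i Y U *\<^sub>v u i"
    unfolding y_i using Gv Gu vc uc by (intro hcat_one_uminus_mult_append_vec) auto
  then have "Khat *\<^sub>v (G i Y U *\<^sub>v u i) = u i"
    using ctrl_i by simp
  with Khat_stab Gu uc show ?thesis
    by (rule stabilizing_feedback_fixpoint_zero)
qed

end
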